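(* Let $k \ge 1$ and let $P_{2k}$ be the uniform distribution on $2k$ equally spaced points of the unit circle $\mathbb{S}^1$, equipped with the arc length distance $d$. Then for each of these $2k$ points $x$, $D(x; P_{2k}) = -1 + \frac{1}{k} - \frac{1}{4 k^2} + \sum_{j = 1}^{k} \frac{1}{j^2}$.
   Context: Define $h: \mathcal{X}^3 \to \mathbb{R}$ by $h(x_1, x_2, x_3) := \mathbb{I}( x_3 \notin \{x_1, x_2\} ) \dfrac{ d^2(x_1, x_3) + d^2(x_2, x_3) - d^2(x_1, x_2) }{d(x_1, x_3)\, d(x_2, x_3) }$, where $h := 0$ when $x_3 \in \{x_1,x_2\}$. The metric spatial depth of $\mu \in \mathcal{X}$ with respect to a probability distribution $P_X$ on $\mathcal{X}$ is $D(\mu; P_X) := 1 - \frac{1}{2} \mathrm{E} \{ h(X_1, X_2, \mu) \}$, where $X_1, X_2 \sim P_X$ are independent. *)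

theory Defs
  imports "HOL-Probability.Probability"
begin

definition msd_h :: "('a \<Rightarrow> 'a \<Rightarrow> real) \<Rightarrow> 'a \<Rightarrow> 'a \<Rightarrow> 'a \<Rightarrow> real" where
  "msd_h d x1 x2 x3 =
     (if x3 \<in> {x1, x2} then 0
      else (d x1 x3 ^ 2 + d x2 x3 ^ 2 - d x1 x2 ^ 2) / (d x1 x3 * d x2 x3))"

definition metric_spatial_depth :: "('a \<Rightarrow> 'a \<Rightarrow> real) \<Rightarrow> 'a \<Rightarrow> 'a pmf \<Rightarrow> real" where
  "metric_spatial_depth d mu P =
     1 - 1/2 * measure_pmf.expectation (pair_pmf P P) (\<lambda>(x1, x2). msd_h d x1 x2 mu)"

text \<open>Unit circle as unit complex numbers; arc length (geodesic) distance.\<close>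
definition arc_dist :: "complex \<Rightarrow> complex \<Rightarrow> real" where
  "arc_dist z w = arccos (Re (z * cnj w))"

definition circle_pt :: "nat \<Rightarrow> nat \<Rightarrow> complex" where
  "circle_pt k j = cis (pi * real j / real k)"

definition P_circ :: "nat \<Rightarrow> complex pmf" where
  "P_circ k = pmf_of_set (circle_pt k ` {0..<2*k})"

end

theory Submission
  imports Defs
begin

(*
  Rotating the circle moves the centre to index 0, and all arc lengths are multiples of pi/k,
  a factor to which the kernel h is insensitive; so the depth is governed by the kernel of the
  cyclic index distance on Z/2kZ.  For two points in the same closed half circle seen from the
  centre, the three distances are collinear and h = 2.  For points at index distances u and v
  on opposite open halves, h = -2 when u + v <= k (the geodesic passes through the centre) and
  h = -2 + 4k/u + 4k/v - 4k^2/(uv) otherwise.  Summing, the only non-elementary term is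
  sum over u, v < k with u + v >= k of 1/(uv), which equals sum_{i<k} 1/i^2: together with the
  sum over u + v < k it makes up (H_{k-1})^2, and induction on n shows that the sum over
  u + v <= n is H_n^2 - sum_{i<=n} 1/i^2, since each step adds the antidiagonal u + v = n + 1,
  whose sum is 2 H_n/(n+1) by partial fractions.
*)

lemma msd_h_similar:
  assumes "inj_on f {x1, x2, x3}" "c \<noteq> 0"
    and "\<And>a b. a \<in> {x1, x2, x3} \<Longrightarrow> b \<in> {x1, x2, x3} \<Longrightarrow> d (f a) (f b) = c * e a b"
  shows "msd_h d (f x1) (f x2) (f x3) = msd_h e x1 x2 x3"
proof -
  have mem: "f x3 \<in> {f x1, f x2} \<longleftrightarrow> x3 \<in> {x1, x2}"
    by (simp add: inj_on_eq_iff[OF assms(1)])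
  have scale: "((c * a)\<^sup>2 + (c * b)\<^sup>2 - (c * a')\<^sup>2) / (c * a * (c * b))
        = (a\<^sup>2 + b\<^sup>2 - a'\<^sup>2) / (a * b)" for a b a' :: real
  proof -
    have num: "(c * a)\<^sup>2 + (c * b)\<^sup>2 - (c * a')\<^sup>2 = c\<^sup>2 * (a\<^sup>2 + b\<^sup>2 - a'\<^sup>2)"
      and den: "c * a * (c * b) = c\<^sup>2 * (a * b)"
      by (simp_all add: power2_eq_square algebra_simps)
    show ?thesis
      unfolding num den using assms(2) by simp
  qed
  show ?thesis
    unfolding msd_h_def mem using assms(3) by (simp add: scale)
qed

lemma msd_h_commute:
  assumes "\<And>x y. d x y = d y x"
  shows "msd_h d x1 x2 x3 = msd_h d x2 x1 x3"
  unfolding msd_h_def by (simp add: assms insert_commute add.commute mult.commute)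

lemma msd_h_eq_2:
  assumes "x3 \<notin> {x1, x2}" "d x1 x3 \<noteq> 0" "d x2 x3 \<noteq> 0"
    and "d x1 x2 = \<bar>d x1 x3 - d x2 x3\<bar>"
  shows "msd_h d x1 x2 x3 = 2"
proof -
  have "(d x1 x3)\<^sup>2 + (d x2 x3)\<^sup>2 - (d x1 x2)\<^sup>2 = 2 * (d x1 x3 * d x2 x3)"
    using assms(4) by (simp add: power2_eq_square algebra_simps)
  then show ?thesis
    using assms(1-3) by (simp add: msd_h_def)
qed

lemma metric_spatial_depth_pmf_of_set:
  assumes "finite S" "S \<noteq> {}"
  shows "metric_spatial_depth d mu (pmf_of_set S)
       = 1 - (\<Sum>x\<in>S. \<Sum>y\<in>S. msd_h d x y mu) / (2 * (real (card S))\<^sup>2)"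
proof -
  let ?h = "\<lambda>(x, y). msd_h d x y mu"
  have "measure_pmf.expectation (pair_pmf (pmf_of_set S) (pmf_of_set S)) ?h
        = (\<Sum>z\<in>S \<times> S. ?h z * pmf (pair_pmf (pmf_of_set S) (pmf_of_set S)) z)"
    by (rule integral_measure_pmf_real) (use assms in auto)
  also have "\<dots> = (\<Sum>z\<in>S \<times> S. ?h z) / (real (card S))\<^sup>2"
    unfolding sum_divide_distrib
    by (rule sum.cong) (auto simp: pmf_pair assms power2_eq_square)
  finally show ?thesis
    by (simp add: metric_spatial_depth_def sum.cartesian_product)
qed

lemma harm_real_eq: "(harm n :: real) = (\<Sum>i = 1..n. 1 / real i)"
  unfolding harm_def by (simp add: inverse_eq_divide)

lemma sum_inverse_products_antidiagonal:
  "(\<Sum>u = 1..n. 1 / (real u * (real (Suc n) - real u))) = 2 * harm n / real (Suc n)"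
proof -
  have partial_fractions: "1 / (a * b) = (1 / a + 1 / b) / (a + b)" if "a > 0" "b > 0" for a b :: real
  proof -
    have "1 / a + 1 / b = (a + b) / (a * b)"
      using that by (simp add: field_simps)
    then show ?thesis
      using that by simp
  qed
  have "(\<Sum>u = 1..n. 1 / (real u * (real (Suc n) - real u)))
      = (\<Sum>u = 1..n. (1 / real u + 1 / (real (Suc n) - real u)) / real (Suc n))"
  proof (rule sum.cong [OF refl])
    fix u assume "u \<in> {1..n}"
    then have "real u > 0" "real (Suc n) - real u > 0"
      by auto
    from partial_fractions [OF this]
    show "1 / (real u * (real (Suc n) - real u)) = (1 / real u + 1 / (real (Suc n) - real u)) / real (Suc n)"
      by simp
  qed
  also have "\<dots> = ((\<Sum>u = 1..n. 1 / real u) + (\<Sum>u = 1..n. 1 / (real (Suc n) - real u))) / real (Suc n)"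
    by (simp only: sum_divide_distrib [symmetric] sum.distrib)
  also have "(\<Sum>u = 1..n. 1 / (real (Suc n) - real u)) = (\<Sum>u = 1..n. 1 / real u)"
    by (subst sum.atLeastAtMost_rev) (auto intro: sum.cong simp: of_nat_diff)
  finally show ?thesis
    by (simp add: harm_real_eq)
qed

lemma sum_inverse_products_below_antidiagonal:
  "(\<Sum>u = 1..n. \<Sum>v = 1..n. if u + v \<le> n then 1 / (real u * real v) else 0)
     = (harm n)\<^sup>2 - (\<Sum>i = 1..n. 1 / (real i)\<^sup>2)"
proof (induction n)
  case 0
  then show ?case by (simp add: harm_real_eq)
next
  case (Suc n)
  have diagonal: "(\<Sum>v = 1..n. if u + v = Suc n then 1 / (real u * real v) else 0)
                = 1 / (real u * (real (Suc n) - real u))" if u: "u \<in> {1..n}" for u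
  proof -
    have "(\<Sum>v = 1..n. if u + v = Suc n then 1 / (real u * real v) else 0)
        = (\<Sum>v\<in>{v \<in> {1..n}. u + v = Suc n}. 1 / (real u * real v))"
      by (rule sum.inter_filter [symmetric]) simp
    also have "{v \<in> {1..n}. u + v = Suc n} = {Suc n - u}"
      using u by auto
    finally show ?thesis
      using u by (simp add: of_nat_diff)
  qed
  have "(\<Sum>u = 1..Suc n. \<Sum>v = 1..Suc n. if u + v \<le> Suc n then 1 / (real u * real v) else 0)
      = (\<Sum>u = 1..n. \<Sum>v = 1..n. if u + v \<le> Suc n then 1 / (real u * real v) else 0)"
    by simp
  also have "\<dots> = (\<Sum>u = 1..n. \<Sum>v = 1..n. (if u + v \<le> n then 1 / (real u * real v) else 0)
           + (if u + v = Suc n then 1 / (real u * real v) else 0))"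
    by (intro sum.cong refl) auto
  also have "\<dots> = (\<Sum>u = 1..n. \<Sum>v = 1..n. if u + v \<le> n then 1 / (real u * real v) else 0)
                 + (\<Sum>u = 1..n. 1 / (real u * (real (Suc n) - real u)))"
    by (simp only: sum.distrib diagonal cong: sum.cong)
  also have "\<dots> = (harm n)\<^sup>2 - (\<Sum>i = 1..n. 1 / (real i)\<^sup>2) + 2 * harm n / real (Suc n)"
    unfolding Suc.IH sum_inverse_products_antidiagonal ..
  also have "\<dots> = (harm (Suc n))\<^sup>2 - (\<Sum>i = 1..Suc n. 1 / (real i)\<^sup>2)"
  proof -
    have "(h + 1 / m)\<^sup>2 - (g + 1 / m\<^sup>2) = h\<^sup>2 - g + 2 * h / m" if "m \<noteq> 0" for h g m :: real
      using that by (simp add: field_simps power2_eq_square)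
    from this [of "real (Suc n)"] show ?thesis
      by (simp add: harm_Suc inverse_eq_divide)
  qed
  finally show ?case .
qed

lemma sum_inverse_products_above_antidiagonal:
  "(\<Sum>u = 1..n. \<Sum>v = 1..n. if n < u + v then 1 / (real u * real v) else 0)
     = (\<Sum>i = 1..n. 1 / (real i)\<^sup>2)"
proof -
  have "(harm n)\<^sup>2 = (\<Sum>u = 1..n. \<Sum>v = 1..n. 1 / (real u * real v))"
    by (simp add: harm_real_eq power2_eq_square sum_product)
  also have "\<dots> = (\<Sum>u = 1..n. \<Sum>v = 1..n. if u + v \<le> n then 1 / (real u * real v) else 0)
                 + (\<Sum>u = 1..n. \<Sum>v = 1..n. if n < u + v then 1 / (real u * real v) else 0)"
    unfolding sum.distrib [symmetric] by (intro sum.cong refl) auto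
  finally show ?thesis
    unfolding sum_inverse_products_below_antidiagonal by simp
qed

(* Distance of indices in Z/2kZ; only meaningful when |a - b| < 2k. *)
definition cyc_dist :: "nat \<Rightarrow> nat \<Rightarrow> nat \<Rightarrow> nat" where
  "cyc_dist k a b = (let r = (if a \<le> b then b - a else a - b) in if r \<le> k then r else 2 * k - r)"

lemma cyc_dist_shift: "cyc_dist k (a + j) (b + j) = cyc_dist k a b"
  unfolding cyc_dist_def by simp

lemma cyc_dist_self [simp]: "cyc_dist k a a = 0"
  unfolding cyc_dist_def by simp

lemma cyc_dist_commute: "cyc_dist k a b = cyc_dist k b a"
  unfolding cyc_dist_def Let_def by auto

lemma cyc_dist_eq_0_iff:
  assumes "a < b + 2 * k" "b < a + 2 * k"
  shows "cyc_dist k a b = 0 \<longleftrightarrow> a = b"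
  using assms unfolding cyc_dist_def Let_def by auto

lemma arc_dist_circle_pt:
  assumes "k \<ge> 1" "a < b + 2 * k" "b < a + 2 * k"
  shows "arc_dist (circle_pt k a) (circle_pt k b) = pi / real k * real (cyc_dist k a b)"
proof -
  define r where "r = (if a \<le> b then b - a else a - b)"
  have "arc_dist (circle_pt k a) (circle_pt k b) = arccos (cos (pi * (real a - real b) / real k))"
    unfolding arc_dist_def circle_pt_def
    by (simp add: cis_cnj cis_mult diff_divide_distrib right_diff_distrib)
  also have "cos (pi * (real a - real b) / real k) = cos (pi * real r / real k)"
  proof (cases "a \<le> b")
    case True
    then have "pi * (real a - real b) / real k = - (pi * real r / real k)"
      by (simp add: r_def of_nat_diff minus_divide_left algebra_simps)
    then show ?thesis
      by simp
  next
    case False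
    then show ?thesis
      by (simp add: r_def of_nat_diff)
  qed
  also have "arccos (cos (pi * real r / real k)) = pi / real k * real (cyc_dist k a b)"
  proof (cases "r \<le> k")
    case True
    then have "pi * real r / real k \<le> pi"
      using assms(1) by (simp add: divide_simps)
    then show ?thesis
      using True by (simp add: arccos_cos cyc_dist_def r_def [symmetric])
  next
    case False
    have "r < 2 * k"
      using assms(2,3) by (auto simp: r_def)
    then have "pi * real r / real k = 2 * pi - pi * real (2 * k - r) / real k"
      using assms(1) by (simp add: of_nat_diff field_simps)
    moreover have "pi * real (2 * k - r) / real k \<le> pi"
      using False assms(1) by (simp add: divide_simps)
    ultimately show ?thesis
      using False by (simp add: arccos_cos cos_diff cyc_dist_def r_def [symmetric])
  qed
  finally show ?thesis .
qed

lemma circle_pt_mod: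
  assumes "k \<ge> 1"
  shows "circle_pt k (n mod (2 * k)) = circle_pt k n"
proof -
  define q where "q = n div (2 * k)"
  define r where "r = n mod (2 * k)"
  have "n = 2 * k * q + r"
    unfolding q_def r_def by simp
  then have "real n = 2 * real k * real q + real r"
    by (metis of_nat_add of_nat_mult of_nat_numeral)
  then have angle: "pi * real n / real k = 2 * pi * real q + pi * real r / real k"
    using assms by (simp add: field_simps)
  have "circle_pt k n = cis (2 * pi * real q) * circle_pt k r"
    unfolding circle_pt_def by (simp only: angle cis_mult)
  then show ?thesis
    by (simp add: r_def)
qed

lemma inj_on_circle_pt_shift:
  assumes "k \<ge> 1"
  shows "inj_on (\<lambda>s. circle_pt k (s + j)) {..<2 * k}"
proof (rule inj_onI)
  fix s t
  assume st: "s \<in> {..<2 * k}" "t \<in> {..<2 * k}" and eq: "circle_pt k (s + j) = circle_pt k (t + j)"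
  have "pi / real k * real (cyc_dist k s t) = 0"
    using arc_dist_circle_pt [OF assms, of "s + j" "t + j"] arc_dist_circle_pt [OF assms, of "t + j" "t + j"]
      st eq by (simp add: cyc_dist_shift)
  then show "s = t"
    using assms st cyc_dist_eq_0_iff [of s t k] by simp
qed

lemma circle_pt_shift_image:
  assumes "k \<ge> 1"
  shows "(\<lambda>s. circle_pt k (s + j)) ` {..<2 * k} = circle_pt k ` {..<2 * k}"
proof (rule card_seteq)
  show "(\<lambda>s. circle_pt k (s + j)) ` {..<2 * k} \<subseteq> circle_pt k ` {..<2 * k}"
  proof
    fix x assume "x \<in> (\<lambda>s. circle_pt k (s + j)) ` {..<2 * k}"
    then obtain s where "x = circle_pt k ((s + j) mod (2 * k))"
      by (auto simp: circle_pt_mod [OF assms])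
    moreover have "(s + j) mod (2 * k) < 2 * k"
      using assms by simp
    ultimately show "x \<in> circle_pt k ` {..<2 * k}"
      by simp
  qed
  show "card (circle_pt k ` {..<2 * k}) \<le> card ((\<lambda>s. circle_pt k (s + j)) ` {..<2 * k})"
    using card_image_le [of "{..<2 * k}" "circle_pt k"]
    by (simp add: card_image [OF inj_on_circle_pt_shift [OF assms]])
qed simp

definition cyc_kernel :: "nat \<Rightarrow> nat \<Rightarrow> nat \<Rightarrow> real" where
  "cyc_kernel k s t = msd_h (\<lambda>a b. real (cyc_dist k a b)) s t 0"

lemma metric_spatial_depth_circle_pt:
  assumes "k \<ge> 1" "j < 2 * k"
  shows "metric_spatial_depth arc_dist (circle_pt k j) (P_circ k)
       = 1 - (\<Sum>s<2 * k. \<Sum>t<2 * k. cyc_kernel k s t) / (8 * (real k)\<^sup>2)"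
proof -
  let ?p = "\<lambda>s. circle_pt k (s + j)"
  have inj: "inj_on ?p {..<2 * k}"
    by (rule inj_on_circle_pt_shift [OF assms(1)])
  have P: "P_circ k = pmf_of_set (?p ` {..<2 * k})"
    by (simp add: P_circ_def atLeast0LessThan circle_pt_shift_image [OF assms(1)])
  have dist: "arc_dist (?p a) (?p b) = pi / real k * real (cyc_dist k a b)"
    if "a < 2 * k" "b < 2 * k" for a b
    using arc_dist_circle_pt [OF assms(1), of "a + j" "b + j"] that by (simp add: cyc_dist_shift)
  have "(\<Sum>x\<in>?p ` {..<2 * k}. \<Sum>y\<in>?p ` {..<2 * k}. msd_h arc_dist x y (circle_pt k j))
      = (\<Sum>s<2 * k. \<Sum>t<2 * k. msd_h arc_dist (?p s) (?p t) (?p 0))"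
    by (simp add: sum.reindex [OF inj])
  also have "\<dots> = (\<Sum>s<2 * k. \<Sum>t<2 * k. cyc_kernel k s t)"
    unfolding cyc_kernel_def
  proof (intro sum.cong refl msd_h_similar)
    fix s t assume "s \<in> {..<2 * k}" "t \<in> {..<2 * k}"
    then have st: "{s, t, 0} \<subseteq> {..<2 * k}"
      using assms(1) by auto
    show "inj_on ?p {s, t, 0}"
      using inj st by (rule inj_on_subset)
    show "arc_dist (?p a) (?p b) = pi / real k * real (cyc_dist k a b)"
      if "a \<in> {s, t, 0}" "b \<in> {s, t, 0}" for a b
      using dist st that by blast
  qed (use assms(1) in simp)
  moreover have "?p ` {..<2 * k} \<noteq> {}"
    using assms(1) by (simp add: lessThan_empty_iff)
  ultimately show ?thesis
    by (simp add: P metric_spatial_depth_pmf_of_set card_image [OF inj] power2_eq_square)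
qed

lemma cyc_kernel_commute: "cyc_kernel k s t = cyc_kernel k t s"
  unfolding cyc_kernel_def by (rule msd_h_commute) (simp add: cyc_dist_commute)

lemma cyc_kernel_0 [simp]: "cyc_kernel k s 0 = 0" "cyc_kernel k 0 t = 0"
  unfolding cyc_kernel_def msd_h_def by simp_all

lemma cyc_kernel_same_half:
  assumes "0 < s" "0 < t" "s < 2 * k" "t < 2 * k" "s \<le> k \<and> t \<le> k \<or> k \<le> s \<and> k \<le> t"
  shows "cyc_kernel k s t = 2"
  unfolding cyc_kernel_def
  by (rule msd_h_eq_2) (use assms in \<open>auto simp: cyc_dist_def Let_def\<close>)

(* h for two points on opposite halves at index distances u and v from the centre: for
   u + v <= k the geodesic between them passes through the centre and h = -2; otherwise
   their distance is 2k - u - v. *)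
definition opposite_kernel :: "nat \<Rightarrow> nat \<Rightarrow> nat \<Rightarrow> real" where
  "opposite_kernel k u v =
     -2 + (if k \<le> u + v then 4 * k / u + 4 * k / v - 4 * (real k)\<^sup>2 / (real u * real v) else 0)"

lemma opposite_kernel_commute: "opposite_kernel k u v = opposite_kernel k v u"
  unfolding opposite_kernel_def by (simp add: add.commute mult.commute)

lemma cyc_kernel_opposite_half:
  assumes "1 \<le> u" "u < k" "1 \<le> v" "v < k"
  shows "cyc_kernel k u (2 * k - v) = opposite_kernel k u v"
    and "cyc_kernel k (2 * k - u) v = opposite_kernel k u v"
proof -
  have dist: "cyc_dist k u 0 = u" "cyc_dist k (2 * k - v) 0 = v"
    "cyc_dist k u (2 * k - v) = (if k \<le> u + v then 2 * k - u - v else u + v)"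
    if "1 \<le> u" "u < k" "1 \<le> v" "v < k" for u v
    using that by (auto simp: cyc_dist_def Let_def)
  have opposite: "cyc_kernel k u (2 * k - v) = opposite_kernel k u v"
    if "1 \<le> u" "u < k" "1 \<le> v" "v < k" for u v
  proof -
    have "u \<noteq> 2 * k - v"
      using that by simp
    then show ?thesis
      using that unfolding cyc_kernel_def msd_h_def opposite_kernel_def dist [OF that]
      by (auto simp: of_nat_diff field_simps power2_eq_square)
  qed
  show "cyc_kernel k u (2 * k - v) = opposite_kernel k u v"
    using opposite assms .
  show "cyc_kernel k (2 * k - u) v = opposite_kernel k u v"
    using opposite [of v u] assms by (simp add: cyc_kernel_commute opposite_kernel_commute)
qed

lemma sum_lessThan_double_split:
  fixes g :: "nat \<Rightarrow> 'a::comm_monoid_add"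
  assumes "k \<ge> 1"
  shows "(\<Sum>s<2 * k. g s) = g 0 + g k + (\<Sum>u\<in>{1..<k}. g u + g (2 * k - u))"
proof -
  have split: "{..<2 * k} = insert 0 (insert k ({1..<k} \<union> {k + 1..<2 * k}))"
    using assms by auto
  have "(\<Sum>s\<in>{k + 1..<2 * k}. g s) = (\<Sum>u\<in>{1..<k}. g (2 * k - u))"
    by (rule sum.reindex_bij_witness [where i = "\<lambda>u. 2 * k - u" and j = "\<lambda>s. 2 * k - s"]) auto
  moreover have "(\<Sum>s<2 * k. g s) = g 0 + (g k + ((\<Sum>u\<in>{1..<k}. g u) + (\<Sum>s\<in>{k + 1..<2 * k}. g s)))"
    unfolding split using assms by (subst sum.insert; auto simp: sum.union_disjoint)+
  ultimately show ?thesis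
    by (simp add: sum.distrib add.assoc)
qed

lemma sum_cyc_kernel_row:
  assumes "k \<ge> 1"
  shows "(\<Sum>t<2 * k. cyc_kernel k s t)
       = cyc_kernel k s k + (\<Sum>v\<in>{1..<k}. cyc_kernel k s v + cyc_kernel k s (2 * k - v))"
  using sum_lessThan_double_split [OF assms, of "cyc_kernel k s"] by simp

lemma sum_cyc_kernel_middle_row:
  assumes "k \<ge> 1"
  shows "(\<Sum>t<2 * k. cyc_kernel k k t) = 4 * real k - 2"
proof -
  have "(\<Sum>v\<in>{1..<k}. cyc_kernel k k v + cyc_kernel k k (2 * k - v)) = (\<Sum>v\<in>{1..<k}. 4)"
  proof (rule sum.cong [OF refl])
    fix v assume v: "v \<in> {1..<k}"
    then have "k \<le> 2 * k - v" "0 < 2 * k - v" "2 * k - v < 2 * k"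
      by auto
    then show "cyc_kernel k k v + cyc_kernel k k (2 * k - v) = 4"
      using v cyc_kernel_same_half [of k v k] cyc_kernel_same_half [of k "2 * k - v" k] by simp
  qed
  then show ?thesis
    unfolding sum_cyc_kernel_row [OF assms]
    using assms cyc_kernel_same_half [of k k k] by (simp add: of_nat_diff)
qed

lemma sum_cyc_kernel_reflected_rows:
  assumes u: "u \<in> {1..<k}"
  shows "(\<Sum>t<2 * k. cyc_kernel k u t) + (\<Sum>t<2 * k. cyc_kernel k (2 * k - u) t)
       = 4 * real k + 2 * (\<Sum>v\<in>{1..<k}. opposite_kernel k u v)"
proof -
  have k: "k \<ge> 1"
    using u by simp
  have entry: "cyc_kernel k u v + cyc_kernel k u (2 * k - v)
               + (cyc_kernel k (2 * k - u) v + cyc_kernel k (2 * k - u) (2 * k - v))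
             = 4 + 2 * opposite_kernel k u v" if v: "v \<in> {1..<k}" for v
  proof -
    have "cyc_kernel k u v = 2" "cyc_kernel k (2 * k - u) (2 * k - v) = 2"
      using u v by (auto intro!: cyc_kernel_same_half)
    then show ?thesis
      using u v by (simp add: cyc_kernel_opposite_half)
  qed
  have "cyc_kernel k u k = 2" "cyc_kernel k (2 * k - u) k = 2"
    using u by (auto intro!: cyc_kernel_same_half)
  moreover have "(\<Sum>t<2 * k. cyc_kernel k u t) + (\<Sum>t<2 * k. cyc_kernel k (2 * k - u) t)
      = cyc_kernel k u k + cyc_kernel k (2 * k - u) k
        + (\<Sum>v\<in>{1..<k}. cyc_kernel k u v + cyc_kernel k u (2 * k - v)
             + (cyc_kernel k (2 * k - u) v + cyc_kernel k (2 * k - u) (2 * k - v)))"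
    unfolding sum_cyc_kernel_row [OF k] sum.distrib by linarith
  moreover have "(\<Sum>v\<in>{1..<k}. cyc_kernel k u v + cyc_kernel k u (2 * k - v)
             + (cyc_kernel k (2 * k - u) v + cyc_kernel k (2 * k - u) (2 * k - v)))
      = (\<Sum>v\<in>{1..<k}. 4 + 2 * opposite_kernel k u v)"
    by (rule sum.cong [OF refl]) (rule entry)
  ultimately have "(\<Sum>t<2 * k. cyc_kernel k u t) + (\<Sum>t<2 * k. cyc_kernel k (2 * k - u) t)
      = 4 + (\<Sum>v\<in>{1..<k}. 4 + 2 * opposite_kernel k u v)"
    by simp
  then show ?thesis
    using k by (simp add: sum.distrib sum_distrib_left of_nat_diff algebra_simps)
qed

lemma sum_cyc_kernel:
  assumes "k \<ge> 1"
  shows "(\<Sum>s<2 * k. \<Sum>t<2 * k. cyc_kernel k s t)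
       = 4 * (real k)\<^sup>2 - 2 + 2 * (\<Sum>u\<in>{1..<k}. \<Sum>v\<in>{1..<k}. opposite_kernel k u v)"
proof -
  have "(\<Sum>s<2 * k. \<Sum>t<2 * k. cyc_kernel k s t)
      = (4 * real k - 2) + (\<Sum>u\<in>{1..<k}. 4 * real k + 2 * (\<Sum>v\<in>{1..<k}. opposite_kernel k u v))"
    using sum_lessThan_double_split [OF assms, of "\<lambda>s. \<Sum>t<2 * k. cyc_kernel k s t"]
    by (simp add: sum_cyc_kernel_middle_row [OF assms] sum_cyc_kernel_reflected_rows)
  then show ?thesis
    using assms by (simp add: sum.distrib sum_distrib_left of_nat_diff power2_eq_square algebra_simps)
qed

lemma sum_opposite_kernel:
  "(\<Sum>u = 1..n. \<Sum>v = 1..n. opposite_kernel (Suc n) u v)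
     = -2 * (real n)\<^sup>2 + 8 * real (Suc n) * real n - 4 * (real (Suc n))\<^sup>2 * (\<Sum>i = 1..n. 1 / (real i)\<^sup>2)"
proof -
  define above where "above u v = (if n < u + v then 1 else 0 :: real)" for u v
  have kernel: "opposite_kernel (Suc n) u v
      = -2 + 4 * real (Suc n) * (above u v / real u) + 4 * real (Suc n) * (above v u / real v)
        - 4 * (real (Suc n))\<^sup>2 * (above u v / (real u * real v))" for u v
    unfolding opposite_kernel_def above_def by (simp add: add.commute [of v u])
  have count: "(\<Sum>v = 1..n. above u v) = real u" if "u \<in> {1..n}" for u
  proof -
    have "(\<Sum>v = 1..n. above u v) = real (card {v \<in> {1..n}. n < u + v})"
      unfolding above_def by (simp add: sum.inter_filter [symmetric])
    also have "{v \<in> {1..n}. n < u + v} = {Suc n - u..n}"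
      using that by auto
    finally show ?thesis
      using that by simp
  qed
  have "(\<Sum>u = 1..n. \<Sum>v = 1..n. above u v / real u) = (\<Sum>u = 1..n. 1)"
  proof (rule sum.cong [OF refl])
    fix u assume u: "u \<in> {1..n}"
    then show "(\<Sum>v = 1..n. above u v / real u) = 1"
      using count [OF u] by (simp add: sum_divide_distrib [symmetric])
  qed
  then have row: "(\<Sum>u = 1..n. \<Sum>v = 1..n. above u v / real u) = real n"
    by simp
  have column: "(\<Sum>u = 1..n. \<Sum>v = 1..n. above v u / real v) = real n"
    using row by (subst sum.swap) simp
  have harmonic: "(\<Sum>u = 1..n. \<Sum>v = 1..n. above u v / (real u * real v)) = (\<Sum>i = 1..n. 1 / (real i)\<^sup>2)"
    unfolding above_def sum_inverse_products_above_antidiagonal [symmetric]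
    by (intro sum.cong refl) simp
  have "(\<Sum>u = 1..n. \<Sum>v = 1..n. opposite_kernel (Suc n) u v)
      = -2 * (real n)\<^sup>2 + 4 * real (Suc n) * (\<Sum>u = 1..n. \<Sum>v = 1..n. above u v / real u)
        + 4 * real (Suc n) * (\<Sum>u = 1..n. \<Sum>v = 1..n. above v u / real v)
        - 4 * (real (Suc n))\<^sup>2 * (\<Sum>u = 1..n. \<Sum>v = 1..n. above u v / (real u * real v))"
    unfolding kernel by (simp only: sum.distrib sum_subtractf sum_distrib_left sum_constant) (simp add: power2_eq_square)
  then show ?thesis
    unfolding row column harmonic by simp
qed

theorem mainTheorem13:
  fixes k j :: nat
  assumes "k \<ge> 1" and "j < 2 * k"
  shows "metric_spatial_depth arc_dist (circle_pt k j) (P_circ k)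
         = -1 + 1 / real k - 1 / (4 * (real k)^2) + (\<Sum>i = 1..k. 1 / (real i)^2)"
proof -
  obtain n where k: "k = Suc n"
    using assms(1) by (cases k) auto
  have "{1..<k} = {1..n}"
    using k by auto
  then have "metric_spatial_depth arc_dist (circle_pt k j) (P_circ k)
      = 1 - (4 * (real k)\<^sup>2 - 2 + 2 * (\<Sum>u = 1..n. \<Sum>v = 1..n. opposite_kernel k u v)) / (8 * (real k)\<^sup>2)"
    unfolding metric_spatial_depth_circle_pt [OF assms] sum_cyc_kernel [OF assms(1)] by simp
  also have "\<dots> = -1 + 1 / real k - 1 / (4 * (real k)^2) + (\<Sum>i = 1..k. 1 / (real i)^2)"
  proof -
    have last: "(\<Sum>i = 1..k. 1 / (real i)\<^sup>2) = (\<Sum>i = 1..n. 1 / (real i)\<^sup>2) + 1 / (real k)\<^sup>2"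
      and n: "real n = real k - 1"
      using k by simp_all
    show ?thesis
      unfolding sum_opposite_kernel [of n, folded k] last n
      using assms(1) by (simp add: field_simps power2_eq_square)
  qed
  finally show ?thesis .
qed

end
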